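(* Let $L/K$ be a finite extension, $K'/K$ a finite Galois extension, and $M/K$ a finite extension with $L\subseteq M$ (all inside $\bar K$), such that $\tilde L$ and $K'$ are linearly disjoint over $K$ and $\tilde M$ and $K'$ are linearly disjoint over $K$. Then $\rho_K(M,L)=\rho_{K'}(MK',LK')$.
   Context: $K$ is a perfect field with a fixed algebraic closure $\bar K$; $\tilde L,\tilde M$ denote Galois closures over $K$ in $\bar K$. Root capacity: for $\alpha\in\bar K$ with minimal polynomial $f$ over $K$ and an extension $M/K$, $\rho_K(M,\alpha)$ is the number of roots of $f$ contained in $M$. For a finite extension $L/K$, $\rho_K(M,L):=\rho_K(M,\alpha)$ for any primitive element $\alpha$ with $L=K(\alpha)$ (this is independent of the choice of $\alpha$). $\rho_{K'}$ is defined analogously with base field $K'$. *)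

theory Defs
  imports "HOL-Computational_Algebra.Polynomial"
begin

text \<open>All fields live inside an ambient field type 'a, playing the role of the
fixed algebraic closure of K. Subfields are represented as sets.\<close>

definition subfield :: "'a::field set \<Rightarrow> bool" where
  "subfield F \<longleftrightarrow> 0 \<in> F \<and> 1 \<in> F \<and>
     (\<forall>x\<in>F. \<forall>y\<in>F. x + y \<in> F \<and> x * y \<in> F) \<and>
     (\<forall>x\<in>F. - x \<in> F \<and> inverse x \<in> F)"

definition poly_over :: "'a::field set \<Rightarrow> 'a poly \<Rightarrow> bool" where
  "poly_over F p \<longleftrightarrow> (\<forall>i. coeff p i \<in> F)"

definition is_alg_closure_of :: "'a::field set \<Rightarrow> bool" where
  "is_alg_closure_of K \<longleftrightarrow>
     (\<forall>p::'a poly. degree p > 0 \<longrightarrow> (\<exists>x. poly p x = 0)) \<and>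
     (\<forall>x::'a. \<exists>p. p \<noteq> 0 \<and> poly_over K p \<and> poly p x = 0)"

definition min_poly :: "'a::field set \<Rightarrow> 'a \<Rightarrow> 'a poly" where
  "min_poly F \<alpha> = (THE p. lead_coeff p = 1 \<and> poly_over F p \<and> poly p \<alpha> = 0 \<and>
        (\<forall>q. poly_over F q \<and> poly q \<alpha> = 0 \<longrightarrow> p dvd q))"

definition perfect :: "'a::field set \<Rightarrow> bool" where
  "perfect K \<longleftrightarrow> (\<forall>\<alpha>. rsquarefree (min_poly K \<alpha>))"

definition gen_field :: "'a::field set \<Rightarrow> 'a set \<Rightarrow> 'a set" where
  "gen_field F S = \<Inter> {E. subfield E \<and> F \<subseteq> E \<and> S \<subseteq> E}"

abbreviation compositum :: "'a::field set \<Rightarrow> 'a set \<Rightarrow> 'a set" where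
  "compositum A B \<equiv> gen_field A B"

definition span_over :: "'a::field set \<Rightarrow> 'a set \<Rightarrow> 'a set" where
  "span_over F B = {y. \<exists>c. (\<forall>b\<in>B. c b \<in> F) \<and> y = (\<Sum>b\<in>B. c b * b)}"

definition lin_indep_over :: "'a::field set \<Rightarrow> 'a set \<Rightarrow> bool" where
  "lin_indep_over F S \<longleftrightarrow> finite S \<and>
     (\<forall>c. (\<forall>x\<in>S. c x \<in> F) \<and> (\<Sum>x\<in>S. c x * x) = 0 \<longrightarrow> (\<forall>x\<in>S. c x = 0))"

definition finite_ext :: "'a::field set \<Rightarrow> 'a set \<Rightarrow> bool" where
  "finite_ext K L \<longleftrightarrow> subfield K \<and> subfield L \<and> K \<subseteq> L \<and>
     (\<exists>B. finite B \<and> B \<subseteq> L \<and> L = span_over K B)"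

definition normal_ext :: "'a::field set \<Rightarrow> 'a set \<Rightarrow> bool" where
  "normal_ext K F \<longleftrightarrow> subfield K \<and> subfield F \<and> K \<subseteq> F \<and>
     (\<forall>x\<in>F. \<forall>y. poly (min_poly K x) y = 0 \<longrightarrow> y \<in> F)"

definition galois_ext :: "'a::field set \<Rightarrow> 'a set \<Rightarrow> bool" where
  "galois_ext K F \<longleftrightarrow> finite_ext K F \<and> normal_ext K F \<and>
     (\<forall>x\<in>F. rsquarefree (min_poly K x))"

definition galois_closure :: "'a::field set \<Rightarrow> 'a set \<Rightarrow> 'a set" where
  "galois_closure K L = \<Inter> {F. normal_ext K F \<and> L \<subseteq> F}"

definition lin_disjoint :: "'a::field set \<Rightarrow> 'a set \<Rightarrow> 'a set \<Rightarrow> bool" where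
  "lin_disjoint K A B \<longleftrightarrow>
     (\<forall>S. S \<subseteq> A \<and> lin_indep_over K S \<longrightarrow> lin_indep_over B S)"

definition root_cap :: "'a::field set \<Rightarrow> 'a set \<Rightarrow> 'a \<Rightarrow> nat" where
  "root_cap K M \<alpha> = card {x\<in>M. poly (min_poly K \<alpha>) x = 0}"

definition root_cap_ext :: "'a::field set \<Rightarrow> 'a set \<Rightarrow> 'a set \<Rightarrow> nat" where
  "root_cap_ext K M L = root_cap K M (SOME \<alpha>. \<alpha> \<in> L \<and> gen_field K {\<alpha>} = L)"

end

theory Submission
  imports Defs "HOL-Algebra.Multiplicative_Group"
begin

(* Since K is perfect, L = K(\<alpha>) and M = K(\<mu>) are simple extensions. Linear disjointness
   of the Galois closure of L from K' keeps 1, \<alpha>, ..., \<alpha>^(n-1) independent over K', so the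
   minimal polynomial f of \<alpha> over K is also minimal over K'; moreover LK' = K'(\<alpha>).
   All roots of f lie in the Galois closure of M. A root \<gamma> in MK' = K'(\<mu>) but outside
   M = K(\<mu>) would extend the basis of powers of \<mu> to a set that is independent over K but
   dependent over K', contradicting the linear disjointness of the Galois closure of M from K'.
   So f has the same roots in MK' as in M. Root capacity does not depend on the generator:
   two generators of a simple extension are polynomials in each other, and these polynomials
   map the roots of one minimal polynomial bijectively onto those of the other. *)

hide_const (open) UnivPoly.coeff UnivPoly.monom Coset.order Module.smult


section \<open>Subfields\<close>

lemma subfieldI:
  assumes "0 \<in> F" "1 \<in> F" "\<And>x y. x \<in> F \<Longrightarrow> y \<in> F \<Longrightarrow> x + y \<in> F"
    "\<And>x y. x \<in> F \<Longrightarrow> y \<in> F \<Longrightarrow> x * y \<in> F" "\<And>x. x \<in> F \<Longrightarrow> - x \<in> F"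
    "\<And>x. x \<in> F \<Longrightarrow> inverse x \<in> F"
  shows "subfield F"
  using assms unfolding subfield_def by auto

lemma
  assumes "subfield F"
  shows subfield_zero: "0 \<in> F" and subfield_one: "1 \<in> F"
    and subfield_add: "\<And>x y. x \<in> F \<Longrightarrow> y \<in> F \<Longrightarrow> x + y \<in> F"
    and subfield_mult: "\<And>x y. x \<in> F \<Longrightarrow> y \<in> F \<Longrightarrow> x * y \<in> F"
    and subfield_uminus: "\<And>x. x \<in> F \<Longrightarrow> - x \<in> F"
    and subfield_inverse: "\<And>x. x \<in> F \<Longrightarrow> inverse x \<in> F"
  using assms unfolding subfield_def by auto

lemma subfield_diff: "subfield F \<Longrightarrow> x \<in> F \<Longrightarrow> y \<in> F \<Longrightarrow> x - y \<in> F"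
  by (metis diff_conv_add_uminus subfield_add subfield_uminus)

lemma subfield_divide: "subfield F \<Longrightarrow> x \<in> F \<Longrightarrow> y \<in> F \<Longrightarrow> x / y \<in> F"
  by (metis divide_inverse subfield_inverse subfield_mult)

lemma subfield_sum: "subfield F \<Longrightarrow> (\<And>i. i \<in> A \<Longrightarrow> f i \<in> F) \<Longrightarrow> sum f A \<in> F"
  by (induction A rule: infinite_finite_induct) (auto intro: subfield_zero subfield_add)

lemma subfield_power: "subfield F \<Longrightarrow> x \<in> F \<Longrightarrow> x ^ n \<in> F"
  by (induction n) (auto intro: subfield_one subfield_mult)

lemma span_over_subset:
  assumes "subfield E" "F \<subseteq> E" "B \<subseteq> E"
  shows "span_over F B \<subseteq> E"
  using assms by (auto simp: span_over_def intro!: subfield_sum subfield_mult)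

lemma subfield_gen_field: "subfield (gen_field F S)"
  unfolding gen_field_def subfield_def by auto

lemma gen_field_base_subset: "F \<subseteq> gen_field F S"
  unfolding gen_field_def by auto

lemma gen_field_gens_subset: "S \<subseteq> gen_field F S"
  unfolding gen_field_def by auto

lemma gen_field_least: "subfield E \<Longrightarrow> F \<subseteq> E \<Longrightarrow> S \<subseteq> E \<Longrightarrow> gen_field F S \<subseteq> E"
  unfolding gen_field_def by auto

lemma gen_field_commute: "gen_field F S = gen_field S F"
  unfolding gen_field_def by blast

lemma gen_field_subset_iff: "gen_field F S \<subseteq> gen_field F T \<longleftrightarrow> S \<subseteq> gen_field F T"
  using gen_field_least[OF subfield_gen_field gen_field_base_subset] gen_field_gens_subset by blast

lemma gen_field_mono: "S \<subseteq> T \<Longrightarrow> gen_field F S \<subseteq> gen_field F T"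
  using gen_field_subset_iff gen_field_gens_subset by blast

lemma gen_field_eq_self: "subfield K \<Longrightarrow> S \<subseteq> K \<Longrightarrow> gen_field K S = K"
  using gen_field_least[of K K S] gen_field_base_subset gen_field_gens_subset by blast

lemma gen_field_gen_field:
  assumes "K \<subseteq> K'"
  shows "gen_field K' (gen_field K S) = gen_field K' S"
proof (rule subset_antisym)
  have "gen_field K S \<subseteq> gen_field K' S"
    using assms gen_field_base_subset[of K' S] gen_field_gens_subset[of S K']
    by (intro gen_field_least[OF subfield_gen_field]) auto
  then show "gen_field K' (gen_field K S) \<subseteq> gen_field K' S"
    by (simp add: gen_field_subset_iff)
  show "gen_field K' S \<subseteq> gen_field K' (gen_field K S)"
    by (intro gen_field_mono gen_field_gens_subset)
qed

lemma gen_field_singleton_extend: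
  assumes "K \<subseteq> K'" "gen_field K {\<alpha>} = L"
  shows "gen_field K' {\<alpha>} = compositum L K'"
  using gen_field_gen_field[OF assms(1)] assms(2) gen_field_commute by metis

lemma finite_ext_eq_gen_field:
  assumes "finite_ext K E"
  obtains B where "finite B" "gen_field K B = E"
proof -
  obtain B where B: "finite B" "B \<subseteq> E" "E = span_over K B"
    and sE: "subfield E" and KE: "K \<subseteq> E"
    using assms unfolding finite_ext_def by blast
  have "E \<subseteq> gen_field K B"
    using B(3) span_over_subset[OF subfield_gen_field gen_field_base_subset gen_field_gens_subset]
    by simp
  with gen_field_least[OF sE KE B(2)] show ?thesis
    using that B(1) by blast
qed

lemma finite_ext_finite:
  assumes "finite_ext K E" "finite K"
  shows "finite E"
proof -
  obtain B where B: "finite B" "E = span_over K B"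
    using assms(1) unfolding finite_ext_def by blast
  have "E \<subseteq> (\<lambda>c. \<Sum>b\<in>B. c b * b) ` (B \<rightarrow>\<^sub>E K)"
  proof
    fix y assume "y \<in> E"
    then obtain c where c: "\<forall>b\<in>B. c b \<in> K" "y = (\<Sum>b\<in>B. c b * b)"
      using B(2) unfolding span_over_def by blast
    then have "y = (\<Sum>b\<in>B. restrict c B b * b)" "restrict c B \<in> B \<rightarrow>\<^sub>E K"
      by auto
    then show "y \<in> (\<lambda>c. \<Sum>b\<in>B. c b * b) ` (B \<rightarrow>\<^sub>E K)" by blast
  qed
  then show ?thesis
    using B(1) assms(2) by (meson finite_PiE finite_surj)
qed

section \<open>Polynomials over a subfield\<close>

lemma poly_over_pCons [simp]: "poly_over F (pCons a p) \<longleftrightarrow> a \<in> F \<and> poly_over F p"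
  unfolding poly_over_def by (metis coeff_pCons_0 coeff_pCons_Suc not0_implies_Suc)

lemma poly_over_0 [simp]: "subfield F \<Longrightarrow> poly_over F 0"
  by (simp add: poly_over_def subfield_zero)

lemma poly_over_add: "subfield F \<Longrightarrow> poly_over F p \<Longrightarrow> poly_over F q \<Longrightarrow> poly_over F (p + q)"
  by (simp add: poly_over_def subfield_add)

lemma poly_over_uminus: "subfield F \<Longrightarrow> poly_over F p \<Longrightarrow> poly_over F (- p)"
  by (simp add: poly_over_def subfield_uminus)

lemma poly_over_diff: "subfield F \<Longrightarrow> poly_over F p \<Longrightarrow> poly_over F q \<Longrightarrow> poly_over F (p - q)"
  by (simp add: poly_over_def subfield_diff)

lemma poly_over_smult: "subfield F \<Longrightarrow> a \<in> F \<Longrightarrow> poly_over F p \<Longrightarrow> poly_over F (smult a p)"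
  by (simp add: poly_over_def subfield_mult)

lemma poly_over_mult: "subfield F \<Longrightarrow> poly_over F p \<Longrightarrow> poly_over F q \<Longrightarrow> poly_over F (p * q)"
  unfolding poly_over_def coeff_mult by (auto intro!: subfield_sum subfield_mult)

lemma poly_over_monom: "subfield F \<Longrightarrow> a \<in> F \<Longrightarrow> poly_over F (monom a n)"
  by (simp add: poly_over_def coeff_monom subfield_zero)

lemma poly_over_sum: "subfield F \<Longrightarrow> (\<And>i. i \<in> A \<Longrightarrow> poly_over F (f i)) \<Longrightarrow> poly_over F (sum f A)"
  by (induction A rule: infinite_finite_induct) (auto intro: poly_over_add)

lemma poly_over_pcompose:
  "subfield F \<Longrightarrow> poly_over F p \<Longrightarrow> poly_over F q \<Longrightarrow> poly_over F (pcompose p q)"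
  by (induction p) (auto simp: pcompose_pCons intro!: poly_over_add poly_over_mult)

lemma poly_over_x: "subfield F \<Longrightarrow> poly_over F [:0, 1:]"
  by (simp add: subfield_zero subfield_one)

lemma poly_over_mono: "F \<subseteq> G \<Longrightarrow> poly_over F p \<Longrightarrow> poly_over G p"
  unfolding poly_over_def by auto

lemma poly_in_subfield: "subfield E \<Longrightarrow> F \<subseteq> E \<Longrightarrow> poly_over F p \<Longrightarrow> x \<in> E \<Longrightarrow> poly p x \<in> E"
  by (induction p) (auto intro!: subfield_add subfield_mult subfield_zero)

lemma poly_eq_sum_lessThan:
  fixes x :: "'a::field"
  assumes "degree p < n"
  shows "poly p x = (\<Sum>i<n. coeff p i * x ^ i)"
  unfolding poly_altdef using assms by (intro sum.mono_neutral_left) (auto simp: coeff_eq_0)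

lemma monic_dvd_imp_eq:
  fixes p q :: "'a::field poly"
  assumes "lead_coeff p = 1" "lead_coeff q = 1" "p dvd q" "degree q \<le> degree p"
  shows "p = q"
proof -
  obtain k where k: "q = p * k" using assms(3) by (auto elim: dvdE)
  then have "k \<noteq> 0" "p \<noteq> 0" using assms(2) by auto
  then have "degree k = 0" using k assms(4) by (simp add: degree_mult_eq)
  moreover have "lead_coeff k = 1" using k assms(1,2) by (simp add: lead_coeff_mult)
  ultimately have "k = 1" by (metis degree_0_id one_pCons)
  then show ?thesis using k by simp
qed

lemma poly_over_reduce:
  assumes F: "subfield F" and m: "poly_over F m" "lead_coeff m = 1" and p: "poly_over F p"
  obtains r where "poly_over F r" "r = 0 \<or> degree r < degree m" "m dvd p - r"
  using p
proof (induction "degree p" arbitrary: p thesis rule: less_induct)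
  case less
  show ?case
  proof (cases "p = 0 \<or> degree p < degree m")
    case True
    then show ?thesis using less.prems by (intro less.prems(1)[of p]) auto
  next
    case False
    then have "p \<noteq> 0" and dm: "degree m \<le> degree p" by auto
    define q where "q = smult (lead_coeff p) (monom 1 (degree p - degree m) * m)"
    have "m \<noteq> 0" using m by auto
    then have dq: "degree (monom 1 (degree p - degree m) * m) = degree p"
      using dm by (simp add: degree_mult_eq degree_monom_eq)
    then have "coeff (monom 1 (degree p - degree m) * m) (degree p) = 1"
      using m by (metis lead_coeff_monom lead_coeff_mult mult_1)
    then have top: "coeff (p - q) (degree p) = 0" unfolding q_def by simp
    have deg: "degree (p - q) \<le> degree p" unfolding q_def
      by (rule degree_diff_le) (auto intro: order.trans[OF degree_smult_le] simp: dq)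
    have over: "poly_over F (p - q)" unfolding q_def using less.prems F m
      by (intro poly_over_diff poly_over_smult poly_over_mult poly_over_monom)
         (auto simp: poly_over_def subfield_one)
    have "m dvd q" unfolding q_def by (simp add: dvd_smult)
    show ?thesis
    proof (cases "p - q = 0")
      case True
      then show ?thesis using \<open>m dvd q\<close> F by (intro less.prems(1)[of 0]) auto
    next
      case False
      then have "degree (p - q) < degree p"
        using top deg by (metis le_neq_implies_less leading_coeff_0_iff)
      then obtain r where r: "poly_over F r" "r = 0 \<or> degree r < degree m" "m dvd p - q - r"
        using less.hyps over by blast
      have "m dvd p - r" using dvd_add[OF r(3) \<open>m dvd q\<close>] by (simp add: algebra_simps)
      then show ?thesis using r less.prems(1) by blast
    qed
  qed
qed

section \<open>Minimal polynomials\<close>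

definition algebraic_over :: "'a::field set \<Rightarrow> 'a \<Rightarrow> bool" where
  "algebraic_over F x \<longleftrightarrow> (\<exists>p. p \<noteq> 0 \<and> poly_over F p \<and> poly p x = 0)"

lemma algebraic_over_mono: "F \<subseteq> G \<Longrightarrow> algebraic_over F x \<Longrightarrow> algebraic_over G x"
  unfolding algebraic_over_def using poly_over_mono by blast

lemma algebraic_over_if_alg_closure:
  "is_alg_closure_of K \<Longrightarrow> K \<subseteq> F \<Longrightarrow> algebraic_over F x"
  unfolding is_alg_closure_of_def by (meson algebraic_over_def algebraic_over_mono)

lemma min_poly_exists:
  assumes F: "subfield F" and x: "algebraic_over F x"
  shows "\<exists>m. lead_coeff m = 1 \<and> poly_over F m \<and> poly m x = 0 \<and>
           (\<forall>q. poly_over F q \<and> poly q x = 0 \<longrightarrow> m dvd q)"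
proof -
  define P where "P n \<longleftrightarrow> (\<exists>p. p \<noteq> 0 \<and> poly_over F p \<and> poly p x = 0 \<and> degree p = n)" for n
  have "\<exists>n. P n"
    using x unfolding algebraic_over_def P_def by blast
  then have "P (LEAST n. P n)" by (rule LeastI_ex)
  then obtain p where p: "p \<noteq> 0" "poly_over F p" "poly p x = 0"
    and least: "degree p = (LEAST n. P n)"
    unfolding P_def by blast
  define m where "m = smult (inverse (lead_coeff p)) p"
  have "lead_coeff p \<noteq> 0" using p(1) by simp
  then have m: "lead_coeff m = 1" "poly_over F m" "poly m x = 0" "degree m = degree p"
    unfolding m_def using p F by (auto simp: poly_over_def intro!: subfield_mult subfield_inverse)
  have "m dvd q" if q: "poly_over F q" "poly q x = 0" for q
  proof -
    obtain r where r: "poly_over F r" "r = 0 \<or> degree r < degree m" "m dvd q - r"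
      using poly_over_reduce[OF F m(2,1) q(1)] .
    then have "poly (q - r) x = 0"
      using m(3) by (metis dvdE mult_eq_0_iff poly_mult)
    then have "poly r x = 0"
      using q(2) by simp
    then have "\<not> (r \<noteq> 0 \<and> degree r < degree m)"
      using r(1) m(4) least by (metis P_def not_less_Least)
    then show ?thesis using r by auto
  qed
  then show ?thesis using m by blast
qed

lemma min_poly_props:
  assumes "subfield F" "algebraic_over F x"
  shows "lead_coeff (min_poly F x) = 1 \<and> poly_over F (min_poly F x) \<and> poly (min_poly F x) x = 0 \<and>
           (\<forall>q. poly_over F q \<and> poly q x = 0 \<longrightarrow> min_poly F x dvd q)"
  unfolding min_poly_def
proof (rule theI')
  show "\<exists>!m. lead_coeff m = 1 \<and> poly_over F m \<and> poly m x = 0 \<and>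
           (\<forall>q. poly_over F q \<and> poly q x = 0 \<longrightarrow> m dvd q)"
  proof (rule ex_ex1I)
    fix m m'
    assume "lead_coeff m = 1 \<and> poly_over F m \<and> poly m x = 0 \<and>
              (\<forall>q. poly_over F q \<and> poly q x = 0 \<longrightarrow> m dvd q)"
      and "lead_coeff m' = 1 \<and> poly_over F m' \<and> poly m' x = 0 \<and>
              (\<forall>q. poly_over F q \<and> poly q x = 0 \<longrightarrow> m' dvd q)"
    then show "m = m'"
      by (metis dvd_imp_degree_le monic_dvd_imp_eq one_neq_zero leading_coeff_0_iff)
  qed (rule min_poly_exists[OF assms])
qed

context
  fixes F :: "'a::field set" and x :: 'a
  assumes F: "subfield F" and x: "algebraic_over F x"
begin

lemma min_poly_monic: "lead_coeff (min_poly F x) = 1"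
  using min_poly_props[OF F x] by blast

lemma min_poly_poly_over: "poly_over F (min_poly F x)"
  using min_poly_props[OF F x] by blast

lemma min_poly_root: "poly (min_poly F x) x = 0"
  using min_poly_props[OF F x] by blast

lemma min_poly_dvd: "poly_over F q \<Longrightarrow> poly q x = 0 \<Longrightarrow> min_poly F x dvd q"
  using min_poly_props[OF F x] by blast

lemma min_poly_nonzero: "min_poly F x \<noteq> 0"
  using min_poly_monic by fastforce

lemma degree_min_poly_le: "q \<noteq> 0 \<Longrightarrow> poly_over F q \<Longrightarrow> poly q x = 0 \<Longrightarrow> degree (min_poly F x) \<le> degree q"
  using min_poly_dvd dvd_imp_degree_le by blast

lemma degree_min_poly_pos: "0 < degree (min_poly F x)"
  by (metis degree_0_id gr0I min_poly_monic min_poly_root one_neq_zero one_pCons poly_1)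

lemma min_poly_coeff_0_nonzero:
  assumes "x \<noteq> 0"
  shows "coeff (min_poly F x) 0 \<noteq> 0"
proof
  assume "coeff (min_poly F x) 0 = 0"
  then obtain h where h: "min_poly F x = pCons 0 h"
    by (metis coeff_pCons_0 pCons_cases)
  then have "h \<noteq> 0" "poly_over F h" "poly h x = 0"
    using min_poly_nonzero min_poly_poly_over min_poly_root assms by auto
  then have "degree (min_poly F x) \<le> degree h" by (rule degree_min_poly_le)
  then show False using h \<open>h \<noteq> 0\<close> by simp
qed

lemma min_poly_root_vanishes:
  assumes "poly_over F h" "poly h x = 0" "poly (min_poly F x) y = 0"
  shows "poly h y = 0"
  using min_poly_dvd[OF assms(1,2)] assms(3) by (elim dvdE) simp

end

section \<open>Simple extensions\<close>

lemma inverse_eq_poly: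
  assumes F: "subfield F" and y: "algebraic_over F y"
  obtains q where "poly_over F q" "inverse y = poly q y"
proof (cases "y = 0")
  case True
  then show ?thesis using that[of 0] F by simp
next
  case False
  obtain c h where h: "min_poly F y = pCons c h"
    by (cases "min_poly F y") auto
  have c: "c \<in> F" "c \<noteq> 0" and "poly_over F h"
    using min_poly_poly_over[OF F y] min_poly_coeff_0_nonzero[OF F y False] h by auto
  have "c + y * poly h y = 0"
    using min_poly_root[OF F y] h by simp
  then have "inverse y = poly (smult (- inverse c) h) y"
    using c(2) by (intro inverse_unique) (simp add: field_simps add_eq_0_iff)
  moreover have "poly_over F (smult (- inverse c) h)"
    using F c(1) \<open>poly_over F h\<close> by (intro poly_over_smult subfield_uminus subfield_inverse)
  ultimately show ?thesis using that by blast
qed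

lemma gen_field_singleton:
  assumes F: "subfield F" and alg: "\<And>y. algebraic_over F y"
  shows "gen_field F {x} = {poly p x | p. poly_over F p}"
proof -
  define R where "R = {poly p x | p. poly_over F p}"
  have R: "poly p x \<in> R" if "poly_over F p" for p
    unfolding R_def using that by blast
  have "subfield R"
  proof (rule subfieldI)
    show "0 \<in> R" "1 \<in> R"
      using R[of 0] R[of "[:1:]"] F by (auto simp: subfield_one)
  next
    fix a b assume "a \<in> R" "b \<in> R"
    then obtain p q where "poly_over F p" "a = poly p x" "poly_over F q" "b = poly q x"
      unfolding R_def by blast
    then show "a + b \<in> R" "a * b \<in> R"
      using R[OF poly_over_add[OF F]] R[OF poly_over_mult[OF F]] by auto
  next
    fix a assume "a \<in> R"
    then obtain p where p: "poly_over F p" "a = poly p x"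
      unfolding R_def by blast
    obtain q where "poly_over F q" "inverse a = poly q a"
      using inverse_eq_poly[OF F alg] .
    then show "- a \<in> R" "inverse a \<in> R"
      using p R[OF poly_over_uminus[OF F p(1)]] R[OF poly_over_pcompose[OF F _ p(1)]]
      by (auto simp: poly_pcompose)
  qed
  moreover have "F \<subseteq> R"
  proof
    fix a assume "a \<in> F"
    then show "a \<in> R" using R[of "[:a:]"] F by simp
  qed
  moreover have "x \<in> R"
    using R[OF poly_over_x[OF F]] by simp
  ultimately have "gen_field F {x} \<subseteq> R"
    by (simp add: gen_field_least)
  moreover have "R \<subseteq> gen_field F {x}"
    unfolding R_def
    using poly_in_subfield[OF subfield_gen_field gen_field_base_subset] gen_field_gens_subset
    by blast
  ultimately show ?thesis
    unfolding R_def by (rule subset_antisym)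
qed

lemma sum_powers_eq_poly:
  fixes x :: "'a::field"
  assumes "inj_on (\<lambda>i. x ^ i) {..<n}"
  shows "(\<Sum>y\<in>(\<lambda>i. x ^ i) ` {..<n}. c y * y) = poly (\<Sum>i<n. monom (c (x ^ i)) i) x"
  by (simp add: sum.reindex[OF assms] poly_sum poly_monom)

lemma poly_eq_sum_powers:
  fixes x :: "'a::field"
  assumes "inj_on (\<lambda>i. x ^ i) {..<n}" "degree p < n"
  shows "poly p x = (\<Sum>y\<in>(\<lambda>i. x ^ i) ` {..<n}. coeff p (inv_into {..<n} (\<lambda>i. x ^ i) y) * y)"
  using assms by (simp add: sum.reindex poly_eq_sum_lessThan[OF assms(2)])

lemma coeff_sum_monom_lessThan:
  "coeff (\<Sum>i<n. monom (a i) i) j = (if j < n then a j else 0)"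
  by (simp add: coeff_sum coeff_monom)

lemma lin_indep_over_powers_iff:
  assumes F: "subfield F" and inj: "inj_on (\<lambda>i. x ^ i) {..<n}"
  shows "lin_indep_over F ((\<lambda>i. x ^ i) ` {..<n}) \<longleftrightarrow>
           (\<forall>p. poly_over F p \<and> degree p < n \<and> poly p x = 0 \<longrightarrow> p = 0)"
proof
  assume indep: "lin_indep_over F ((\<lambda>i. x ^ i) ` {..<n})"
  show "\<forall>p. poly_over F p \<and> degree p < n \<and> poly p x = 0 \<longrightarrow> p = 0"
  proof safe
    fix p assume p: "poly_over F p" "degree p < n" "poly p x = 0"
    define c where "c y = coeff p (inv_into {..<n} (\<lambda>i. x ^ i) y)" for y
    have "\<forall>y\<in>(\<lambda>i. x ^ i) ` {..<n}. c y = 0"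
      using indep p poly_eq_sum_powers[OF inj p(2)]
      unfolding lin_indep_over_def c_def poly_over_def by auto
    then have "coeff p i = 0" for i
      using p(2) inv_into_f_f[OF inj] unfolding c_def
      by (cases "i < n") (auto simp: coeff_eq_0)
    then show "p = 0" by (simp add: poly_eqI)
  qed
next
  assume zero: "\<forall>p. poly_over F p \<and> degree p < n \<and> poly p x = 0 \<longrightarrow> p = 0"
  have "\<forall>y\<in>(\<lambda>i. x ^ i) ` {..<n}. c y = 0"
    if c: "\<forall>y\<in>(\<lambda>i. x ^ i) ` {..<n}. c y \<in> F" "(\<Sum>y\<in>(\<lambda>i. x ^ i) ` {..<n}. c y * y) = 0" for c
  proof (cases "n = 0")
    case False
    define p where "p = (\<Sum>i<n. monom (c (x ^ i)) i)"
    have "poly_over F p" "poly p x = 0"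
      using c F sum_powers_eq_poly[OF inj] unfolding p_def
      by (auto intro!: poly_over_sum poly_over_monom)
    moreover have "degree p < n"
      using False unfolding p_def
      by (intro le_less_trans[OF degree_le[of "n - 1"]]) (auto simp: coeff_sum_monom_lessThan)
    ultimately have "p = 0" using zero by blast
    then have "c (x ^ i) = 0" if "i < n" for i
      using coeff_sum_monom_lessThan[of "\<lambda>i. c (x ^ i)" n i] that unfolding p_def by simp
    then show ?thesis by blast
  qed simp
  then show "lin_indep_over F ((\<lambda>i. x ^ i) ` {..<n})"
    unfolding lin_indep_over_def by blast
qed

context
  fixes F :: "'a::field set" and x :: 'a
  assumes F: "subfield F" and x: "algebraic_over F x"
begin

lemma inj_on_powers_min_poly: "inj_on (\<lambda>i. x ^ i) {..<degree (min_poly F x)}"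
proof -
  have "x ^ i \<noteq> x ^ j" if ij: "i < j" "j < degree (min_poly F x)" for i j
  proof
    assume "x ^ i = x ^ j"
    define q where "q = monom 1 j - monom (1::'a) i"
    have "coeff q j = 1" "degree q \<le> j"
      using ij unfolding q_def
      by (auto simp: coeff_monom intro!: degree_diff_le order.trans[OF degree_monom_le])
    moreover have "poly q x = 0" "poly_over F q"
      using \<open>x ^ i = x ^ j\<close> F unfolding q_def
      by (auto simp: poly_monom intro!: poly_over_diff poly_over_monom subfield_one)
    ultimately show False
      using degree_min_poly_le[OF F x, of q] ij by fastforce
  qed
  then show ?thesis
    by (intro inj_onI) (metis lessThan_iff linorder_neqE_nat)
qed

lemma lin_indep_powers_min_poly: "lin_indep_over F ((\<lambda>i. x ^ i) ` {..<degree (min_poly F x)})"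
proof -
  have "p = 0" if "poly_over F p" "degree p < degree (min_poly F x)" "poly p x = 0" for p
    using degree_min_poly_le[OF F x _ that(1,3)] that(2) by fastforce
  then show ?thesis
    by (simp add: lin_indep_over_powers_iff[OF F inj_on_powers_min_poly])
qed

end

lemma gen_field_singleton_eq_span_powers:
  assumes F: "subfield F" and alg: "\<And>y. algebraic_over F y"
  shows "gen_field F {x} = span_over F ((\<lambda>i. x ^ i) ` {..<degree (min_poly F x)})"
    (is "_ = span_over F (?P ` {..<?n})")
proof (rule subset_antisym)
  show "gen_field F {x} \<subseteq> span_over F (?P ` {..<?n})"
  proof
    fix y assume "y \<in> gen_field F {x}"
    then obtain p where p: "poly_over F p" "y = poly p x"
      using gen_field_singleton[OF F alg] by blast
    obtain r where r: "poly_over F r" "r = 0 \<or> degree r < ?n" "min_poly F x dvd p - r"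
      using poly_over_reduce[OF F min_poly_poly_over[OF F alg] min_poly_monic[OF F alg] p(1)] .
    have "poly (p - r) x = 0"
      using r(3) min_poly_root[OF F alg] by (metis dvdE mult_eq_0_iff poly_mult)
    moreover have "degree r < ?n"
      using r(2) degree_min_poly_pos[OF F alg] by auto
    ultimately have "y = (\<Sum>z\<in>?P ` {..<?n}. coeff r (inv_into {..<?n} ?P z) * z)"
      using p(2) poly_eq_sum_powers[OF inj_on_powers_min_poly[OF F alg]] by simp
    moreover have "\<forall>z\<in>?P ` {..<?n}. coeff r (inv_into {..<?n} ?P z) \<in> F"
      using r(1) unfolding poly_over_def by blast
    ultimately show "y \<in> span_over F (?P ` {..<?n})"
      unfolding span_over_def
      by (intro CollectI exI[of _ "\<lambda>z. coeff r (inv_into {..<?n} ?P z)"]) simp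
  qed
  show "span_over F (?P ` {..<?n}) \<subseteq> gen_field F {x}"
    using gen_field_gens_subset[of "{x}" F]
    by (intro span_over_subset subfield_gen_field gen_field_base_subset)
       (auto intro!: subfield_power[OF subfield_gen_field])
qed

lemma min_poly_maps_roots:
  assumes F: "subfield F" and a: "algebraic_over F a" and b: "algebraic_over F b"
    and p: "poly_over F p" "b = poly p a" and q: "poly_over F q" "a = poly q b"
    and y: "poly (min_poly F a) y = 0"
  shows "poly (min_poly F b) (poly p y) = 0" and "poly q (poly p y) = y"
proof -
  have "poly_over F (pcompose (min_poly F b) p)" "poly_over F (pcompose q p - [:0, 1:])"
    using F p(1) q(1) min_poly_poly_over[OF F b]
    by (auto intro!: poly_over_pcompose poly_over_diff poly_over_x)
  moreover have "poly (pcompose (min_poly F b) p) a = 0" "poly (pcompose q p - [:0, 1:]) a = 0"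
    using p(2) q(2) min_poly_root[OF F b] by (auto simp: poly_pcompose)
  ultimately have "poly (pcompose (min_poly F b) p) y = 0" "poly (pcompose q p - [:0, 1:]) y = 0"
    using min_poly_root_vanishes[OF F a _ _ y] by blast+
  then show "poly (min_poly F b) (poly p y) = 0" "poly q (poly p y) = y"
    by (simp_all add: poly_pcompose)
qed

lemma root_cap_eq_if_gen_field_eq:
  assumes F: "subfield F" and E: "subfield E" "F \<subseteq> E" and alg: "\<And>y. algebraic_over F y"
    and ab: "gen_field F {a} = gen_field F {b}"
  shows "root_cap F E a = root_cap F E b"
proof -
  have "b \<in> gen_field F {a}" "a \<in> gen_field F {b}"
    using ab gen_field_gens_subset[of "{a}" F] gen_field_gens_subset[of "{b}" F] by auto
  then obtain p q where p: "poly_over F p" "b = poly p a" and q: "poly_over F q" "a = poly q b"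
    unfolding gen_field_singleton[OF F alg] by blast
  note maps_a = min_poly_maps_roots[OF F alg alg p q]
  note maps_b = min_poly_maps_roots[OF F alg alg q p]
  have "bij_betw (poly p) {y\<in>E. poly (min_poly F a) y = 0} {z\<in>E. poly (min_poly F b) z = 0}"
  proof (rule bij_betw_byWitness[where f' = "poly q"])
    show "\<forall>y\<in>{y\<in>E. poly (min_poly F a) y = 0}. poly q (poly p y) = y"
      using maps_a(2) by blast
    show "\<forall>z\<in>{z\<in>E. poly (min_poly F b) z = 0}. poly p (poly q z) = z"
      using maps_b(2) by blast
    show "poly p ` {y\<in>E. poly (min_poly F a) y = 0} \<subseteq> {z\<in>E. poly (min_poly F b) z = 0}"
      using maps_a(1) poly_in_subfield[OF E p(1)] by blast
    show "poly q ` {z\<in>E. poly (min_poly F b) z = 0} \<subseteq> {y\<in>E. poly (min_poly F a) y = 0}"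
      using maps_b(1) poly_in_subfield[OF E q(1)] by blast
  qed
  then show ?thesis
    unfolding root_cap_def by (rule bij_betw_same_card)
qed

lemma root_cap_ext_eq_root_cap:
  assumes K: "subfield K" and M: "subfield M" "K \<subseteq> M" and alg: "\<And>y. algebraic_over K y"
    and L: "gen_field K {\<alpha>} = L"
  shows "root_cap_ext K M L = root_cap K M \<alpha>"
proof -
  have "\<exists>\<beta>. \<beta> \<in> L \<and> gen_field K {\<beta>} = L"
    using L gen_field_gens_subset[of "{\<alpha>}" K] by blast
  then have "gen_field K {SOME \<beta>. \<beta> \<in> L \<and> gen_field K {\<beta>} = L} = gen_field K {\<alpha>}"
    unfolding L by (rule someI_ex[THEN conjunct2])
  then show ?thesis
    unfolding root_cap_ext_def by (rule root_cap_eq_if_gen_field_eq[OF K M alg])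
qed

section \<open>The primitive element theorem\<close>

lemma finite_subfield_cyclic:
  fixes E :: "'a::field set"
  assumes E: "subfield E" and fin: "finite E"
  obtains a where "a \<in> E" "\<And>x. x \<in> E \<Longrightarrow> x \<noteq> 0 \<Longrightarrow> \<exists>i::nat. x = a ^ i"
proof -
  define R :: "'a ring" where
    "R = \<lparr>carrier = E, monoid.mult = (*), one = 1, zero = 0, add = (+)\<rparr>"
  have R: "carrier R = E" "\<And>x y. x \<otimes>\<^bsub>R\<^esub> y = x * y" "\<one>\<^bsub>R\<^esub> = 1" "\<zero>\<^bsub>R\<^esub> = 0"
    "\<And>x y. x \<oplus>\<^bsub>R\<^esub> y = x + y"
    by (simp_all add: R_def)
  note closed = subfield_zero[OF E] subfield_one[OF E] subfield_add[OF E] subfield_mult[OF E]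
    subfield_uminus[OF E] subfield_inverse[OF E]
  have "cring R"
  proof (rule cringI)
    show "abelian_group R"
      by (rule abelian_groupI) (auto simp: R closed add.assoc add.commute intro!: bexI[of _ "- _"])
    show "Group.comm_monoid R"
      by (rule comm_monoidI) (auto simp: R closed mult.assoc mult.commute)
  qed (simp add: R distrib_right)
  then have "field R"
  proof (rule cring.field_intro2)
    fix x assume "x \<in> carrier R - {\<zero>\<^bsub>R\<^esub>}"
    then show "x \<in> Units R"
      unfolding Units_def by (auto simp: R closed intro!: bexI[of _ "inverse x"])
  qed (simp add: R)
  then obtain a where a: "a \<in> carrier (mult_of R)"
    and gen: "carrier (mult_of R) = {a [^]\<^bsub>R\<^esub> i | i::nat. i \<in> UNIV}"
    using field.finite_field_mult_group_has_gen[of R] fin R(1) by (auto elim!: bexE)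
  have pow: "a [^]\<^bsub>R\<^esub> i = a ^ i" for i :: nat
    by (induct i) (simp_all add: R)
  show ?thesis
  proof (rule that)
    show "a \<in> E" using a R(1) by simp
    fix x assume "x \<in> E" "x \<noteq> 0"
    then have "x \<in> carrier (mult_of R)" using R by simp
    then obtain i :: nat where "x = a [^]\<^bsub>R\<^esub> i" using gen by blast
    then show "\<exists>i::nat. x = a ^ i" using pow by auto
  qed
qed

lemma primitive_element_finite:
  assumes E: "finite_ext K E" and fin: "finite K"
  shows "\<exists>\<theta>. gen_field K {\<theta>} = E"
proof -
  have E': "subfield E" "K \<subseteq> E" using E unfolding finite_ext_def by auto
  obtain a where a: "a \<in> E" "\<And>x. x \<in> E \<Longrightarrow> x \<noteq> 0 \<Longrightarrow> \<exists>i::nat. x = a ^ i"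
    using finite_subfield_cyclic[OF E'(1) finite_ext_finite[OF E fin]] by blast
  have "E \<subseteq> gen_field K {a}"
  proof
    fix x assume "x \<in> E"
    show "x \<in> gen_field K {a}"
    proof (cases "x = 0")
      case True
      then show ?thesis using subfield_zero[OF subfield_gen_field] by simp
    next
      case False
      then obtain i where "x = a ^ i" using a(2) \<open>x \<in> E\<close> by blast
      moreover have "a \<in> gen_field K {a}" using gen_field_gens_subset by blast
      ultimately show ?thesis using subfield_power[OF subfield_gen_field] by blast
    qed
  qed
  moreover have "gen_field K {a} \<subseteq> E"
    using gen_field_least[OF E'] a(1) by blast
  ultimately show ?thesis by blast
qed

lemma monic_dvd_rsquarefree_single_root:
  fixes m g :: "'a::field poly"
  assumes closed: "\<forall>p::'a poly. 0 < degree p \<longrightarrow> (\<exists>x. poly p x = 0)"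
    and m: "lead_coeff m = 1" "m dvd g" "poly m b = 0" and g: "rsquarefree g"
    and single: "\<And>y. poly m y = 0 \<Longrightarrow> y = b"
  shows "m = [:-b, 1:]"
proof -
  have "[:-b, 1:] dvd m"
    using m(3) by (simp add: poly_eq_0_iff_dvd)
  then obtain k where k: "m = [:-b, 1:] * k" by (elim dvdE)
  have "degree k = 0"
  proof (rule ccontr)
    assume "degree k \<noteq> 0"
    then obtain y where "poly k y = 0" using closed by blast
    then have "y = b" using single k by simp
    then have "[:-b, 1:] dvd k"
      using \<open>poly k y = 0\<close> by (simp add: poly_eq_0_iff_dvd)
    then obtain k' where "k = [:-b, 1:] * k'" by (elim dvdE)
    then have "m = [:-b, 1:] ^ 2 * k'"
      using k by (simp only: power2_eq_square mult.assoc)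
    then have "[:-b, 1:] ^ 2 dvd g"
      using m(2) by (metis dvd_trans dvd_triv_left)
    then have "2 \<le> order b g"
      using g by (simp add: rsquarefree_def order_divides)
    moreover have "order b g = 0 \<or> order b g = 1"
      using g unfolding rsquarefree_def by blast
    ultimately show False by linarith
  qed
  moreover have "lead_coeff k = 1"
    using m(1) unfolding k lead_coeff_mult by simp
  ultimately have "k = 1" by (metis degree_0_id one_pCons)
  then show ?thesis using k by simp
qed

context
  fixes K :: "'a::field set"
  assumes K: "subfield K" and closure: "is_alg_closure_of K" and perfect: "perfect K"
begin

lemma mem_subfield_if_min_poly_single_root:
  assumes T: "subfield T" "K \<subseteq> T" and single: "\<And>y. poly (min_poly T b) y = 0 \<Longrightarrow> y = b"
  shows "b \<in> T"
proof -
  note bT = algebraic_over_if_alg_closure[OF closure T(2)]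
  note bK = algebraic_over_if_alg_closure[OF closure order.refl]
  have "min_poly T b = [:-b, 1:]"
  proof (rule monic_dvd_rsquarefree_single_root[OF _ min_poly_monic[OF T(1) bT]])
    show "\<forall>p::'a poly. 0 < degree p \<longrightarrow> (\<exists>x. poly p x = 0)"
      using closure unfolding is_alg_closure_of_def by blast
    show "min_poly T b dvd min_poly K b"
      using T min_poly_poly_over[OF K bK] min_poly_root[OF K bK]
      by (intro min_poly_dvd[OF T(1) bT]) (auto intro: poly_over_mono)
    show "rsquarefree (min_poly K b)"
      using perfect unfolding perfect_def by blast
  qed (use min_poly_root[OF T(1) bT] single in auto)
  then have "- b \<in> T"
    using min_poly_poly_over[OF T(1) bT] unfolding poly_over_def by (metis coeff_pCons_0)
  then show ?thesis
    using subfield_uminus[OF T(1)] by fastforce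
qed

lemma mem_gen_field_if_avoids_root_quotients:
  assumes c: "c \<in> K"
    and avoid: "\<And>a' b'. poly (min_poly K a) a' = 0 \<Longrightarrow> poly (min_poly K b) b' = 0 \<Longrightarrow> b' \<noteq> b \<Longrightarrow>
      (a' - a) / (b - b') \<noteq> c"
  shows "b \<in> gen_field K {a + c * b}"
proof -
  note alg = algebraic_over_if_alg_closure[OF closure order.refl]
  define \<theta> where "\<theta> = a + c * b"
  define T where "T = gen_field K {\<theta>}"
  have T: "subfield T" "K \<subseteq> T" "\<theta> \<in> T"
    unfolding T_def using subfield_gen_field gen_field_base_subset gen_field_gens_subset by blast+
  note bT = algebraic_over_if_alg_closure[OF closure T(2)]
  define f where "f = pcompose (min_poly K a) [:\<theta>, -c:]"
  have "poly_over T [:\<theta>, -c:]"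
    using T c subfield_uminus[OF T(1)] by auto
  then have "poly_over T f" "poly_over T (min_poly K b)"
    unfolding f_def using poly_over_mono[OF T(2) min_poly_poly_over[OF K alg]]
    by (auto intro: poly_over_pcompose[OF T(1)])
  moreover have "poly f b = 0" "poly (min_poly K b) b = 0"
    unfolding f_def \<theta>_def using min_poly_root[OF K alg] by (simp_all add: poly_pcompose)
  ultimately have common: "poly f y = 0" "poly (min_poly K b) y = 0"
    if "poly (min_poly T b) y = 0" for y
    using min_poly_root_vanishes[OF T(1) bT _ _ that] by blast+
  have "y = b" if y: "poly (min_poly T b) y = 0" for y
  proof (rule ccontr)
    assume "y \<noteq> b"
    then have "((\<theta> - y * c) - a) / (b - y) = c"
      unfolding \<theta>_def by (simp add: field_simps)
    moreover have "poly (min_poly K a) (\<theta> - y * c) = 0"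
      using common(1)[OF y] unfolding f_def by (simp add: poly_pcompose)
    ultimately show False
      using avoid common(2)[OF y] \<open>y \<noteq> b\<close> by blast
  qed
  then have "b \<in> T" by (rule mem_subfield_if_min_poly_single_root[OF T(1,2)])
  then show ?thesis unfolding T_def \<theta>_def .
qed

lemma primitive_element_step:
  assumes inf: "infinite K"
  shows "\<exists>c\<in>K. b \<in> gen_field K {a + c * b}"
proof -
  note alg = algebraic_over_if_alg_closure[OF closure order.refl]
  define bad where "bad = (\<lambda>(a', b'). (a' - a) / (b - b')) `
    ({x. poly (min_poly K a) x = 0} \<times> {y. poly (min_poly K b) y = 0})"
  have "finite bad"
    unfolding bad_def using min_poly_nonzero[OF K alg] by (simp add: poly_roots_finite)
  then have "K - bad \<noteq> {}"
    using inf by (metis Diff_infinite_finite finite.emptyI)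
  then obtain c where "c \<in> K" "c \<notin> bad"
    by blast
  moreover have "(a' - a) / (b - b') \<in> bad"
    if "poly (min_poly K a) a' = 0" "poly (min_poly K b) b' = 0" for a' b'
    unfolding bad_def using that by (intro image_eqI[where x = "(a', b')"]) simp_all
  ultimately show ?thesis
    using mem_gen_field_if_avoids_root_quotients by metis
qed

lemma primitive_element_pair:
  assumes inf: "infinite K"
  shows "\<exists>\<theta>. gen_field K {a, b} = gen_field K {\<theta>}"
proof -
  obtain c where c: "c \<in> K" "b \<in> gen_field K {a + c * b}"
    using primitive_element_step[OF inf] by blast
  define T where "T = gen_field K {a + c * b}"
  have T: "subfield T" "K \<subseteq> T" "a + c * b \<in> T" "b \<in> T"
    unfolding T_def using subfield_gen_field gen_field_base_subset gen_field_gens_subset c(2)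
    by blast+
  then have "(a + c * b) - c * b \<in> T"
    using c(1) by (intro subfield_diff[OF T(1)] subfield_mult[OF T(1)]) auto
  then have "{a, b} \<subseteq> T"
    using T(4) by simp
  then have "gen_field K {a, b} \<subseteq> T"
    by (rule gen_field_least[OF T(1,2)])
  moreover have "a + c * b \<in> gen_field K {a, b}"
    using c(1) gen_field_base_subset[of K "{a, b}"] gen_field_gens_subset[of "{a, b}" K]
    by (intro subfield_add[OF subfield_gen_field] subfield_mult[OF subfield_gen_field]) auto
  then have "T \<subseteq> gen_field K {a, b}"
    unfolding T_def gen_field_subset_iff by simp
  ultimately show ?thesis unfolding T_def by blast
qed

lemma primitive_element_finite_set:
  assumes inf: "infinite K" and S: "finite S"
  shows "\<exists>\<theta>. gen_field K S = gen_field K {\<theta>}"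
  using S
proof (induction S rule: finite_induct)
  case empty
  have "gen_field K {} = gen_field K {0}"
    using gen_field_eq_self[OF K] subfield_zero[OF K] by simp
  then show ?case by blast
next
  case (insert b S)
  then obtain a where a: "gen_field K S = gen_field K {a}" by blast
  have "insert b S \<subseteq> gen_field K {a, b}"
    using a gen_field_gens_subset[of S K] gen_field_mono[of "{a}" "{a, b}" K]
      gen_field_gens_subset[of "{a, b}" K] by blast
  moreover have "{a, b} \<subseteq> gen_field K (insert b S)"
    using a gen_field_gens_subset[of "{a}" K] gen_field_mono[of S "insert b S" K]
      gen_field_gens_subset[of "insert b S" K] by blast
  ultimately have "gen_field K (insert b S) = gen_field K {a, b}"
    using gen_field_subset_iff[of K "insert b S" "{a, b}"]
      gen_field_subset_iff[of K "{a, b}" "insert b S"]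
    by (intro subset_antisym) blast+
  then show ?case using primitive_element_pair[OF inf, of a b] by auto
qed

theorem primitive_element:
  assumes E: "finite_ext K E"
  shows "\<exists>\<theta>. gen_field K {\<theta>} = E"
proof (cases "finite K")
  case True
  then show ?thesis using primitive_element_finite[OF E] by blast
next
  case False
  obtain B where "finite B" "gen_field K B = E"
    using finite_ext_eq_gen_field[OF E] .
  with primitive_element_finite_set[OF False] show ?thesis by force
qed

end

section \<open>Linear disjointness\<close>

lemma lin_disjoint_subset: "lin_disjoint K A K' \<Longrightarrow> B \<subseteq> A \<Longrightarrow> lin_disjoint K B K'"
  unfolding lin_disjoint_def by blast

lemma not_lin_indep_over_insert_if_in_span:
  assumes F: "subfield F" and P: "finite P" and \<gamma>: "\<gamma> \<notin> P" "\<gamma> \<in> span_over F P"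
  shows "\<not> lin_indep_over F (insert \<gamma> P)"
proof
  assume indep: "lin_indep_over F (insert \<gamma> P)"
  obtain c where c: "\<forall>b\<in>P. c b \<in> F" "\<gamma> = (\<Sum>b\<in>P. c b * b)"
    using \<gamma>(2) unfolding span_over_def by blast
  have "(\<Sum>x\<in>P. (c(\<gamma> := -1)) x * x) = (\<Sum>b\<in>P. c b * b)"
    using \<gamma>(1) by (intro sum.cong) auto
  then have "(\<Sum>x\<in>insert \<gamma> P. (c(\<gamma> := -1)) x * x) = 0"
    using P \<gamma>(1) c(2) by simp
  moreover have "\<forall>x\<in>insert \<gamma> P. (c(\<gamma> := -1)) x \<in> F"
    using c(1) \<gamma>(1) F by (auto intro: subfield_uminus subfield_one)
  ultimately have "\<forall>x\<in>insert \<gamma> P. (c(\<gamma> := -1)) x = 0"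
    using indep unfolding lin_indep_over_def by blast
  then show False by simp
qed

lemma lin_indep_over_insert:
  assumes F: "subfield F" and P: "lin_indep_over F P" and \<gamma>: "\<gamma> \<notin> P" "\<gamma> \<notin> span_over F P"
  shows "lin_indep_over F (insert \<gamma> P)"
proof -
  have fin: "finite P" using P unfolding lin_indep_over_def by blast
  have "\<forall>x\<in>insert \<gamma> P. c x = 0"
    if c: "\<forall>x\<in>insert \<gamma> P. c x \<in> F" "(\<Sum>x\<in>insert \<gamma> P. c x * x) = 0" for c
  proof -
    have sum: "c \<gamma> * \<gamma> + (\<Sum>x\<in>P. c x * x) = 0"
      using c(2) fin \<gamma>(1) by simp
    have "c \<gamma> = 0"
    proof (rule ccontr)
      assume "c \<gamma> \<noteq> 0"
      moreover have "c \<gamma> * \<gamma> = - (\<Sum>x\<in>P. c x * x)"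
        using sum by (simp add: add_eq_0_iff)
      ultimately have "\<gamma> = - (\<Sum>x\<in>P. c x * x) / c \<gamma>"
        by (simp add: field_simps)
      also have "\<dots> = (\<Sum>x\<in>P. (- c x / c \<gamma>) * x)"
        by (simp add: sum_divide_distrib sum_negf[symmetric])
      finally have "\<gamma> = (\<Sum>x\<in>P. (- c x / c \<gamma>) * x)" .
      moreover have "\<forall>x\<in>P. - c x / c \<gamma> \<in> F"
        using c(1) F by (auto intro: subfield_divide subfield_uminus)
      ultimately have "\<gamma> \<in> span_over F P"
        unfolding span_over_def by (intro CollectI exI[of _ "\<lambda>x. - c x / c \<gamma>"]) simp
      then show False using \<gamma>(2) by blast
    qed
    then have "\<forall>x\<in>P. c x = 0"
      using P c(1) sum unfolding lin_indep_over_def by simp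
    then show ?thesis using \<open>c \<gamma> = 0\<close> by simp
  qed
  then show ?thesis
    unfolding lin_indep_over_def using fin by simp
qed

lemma min_poly_eq_if_lin_disjoint:
  assumes K: "subfield K" and K': "subfield K'" "K \<subseteq> K'" and x: "algebraic_over K x"
    and disj: "lin_disjoint K L K'" and L: "subfield L" "x \<in> L"
  shows "min_poly K' x = min_poly K x"
proof -
  define n where "n = degree (min_poly K x)"
  have x': "algebraic_over K' x" using algebraic_over_mono[OF K'(2) x] .
  have "(\<lambda>i. x ^ i) ` {..<n} \<subseteq> L"
    using subfield_power[OF L] by blast
  then have "lin_indep_over K' ((\<lambda>i. x ^ i) ` {..<n})"
    using disj lin_indep_powers_min_poly[OF K x] unfolding lin_disjoint_def n_def by blast
  then have "\<not> degree (min_poly K' x) < n"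
    using min_poly_nonzero[OF K'(1) x'] min_poly_poly_over[OF K'(1) x'] min_poly_root[OF K'(1) x']
    unfolding lin_indep_over_powers_iff[OF K'(1) inj_on_powers_min_poly[OF K x, folded n_def]]
    by blast
  moreover have "min_poly K' x dvd min_poly K x"
    using min_poly_dvd[OF K'(1) x' poly_over_mono[OF K'(2) min_poly_poly_over[OF K x]]]
      min_poly_root[OF K x] .
  ultimately show ?thesis
    using monic_dvd_imp_eq[OF min_poly_monic[OF K'(1) x'] min_poly_monic[OF K x]] n_def by simp
qed

lemma inter_gen_field_eq_if_lin_disjoint:
  assumes K: "subfield K" and K': "subfield K'" "K \<subseteq> K'" and alg: "\<And>y. algebraic_over K y"
    and disj: "lin_disjoint K A K'" and A: "gen_field K {\<mu>} \<subseteq> A"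
  shows "A \<inter> gen_field K' {\<mu>} = gen_field K {\<mu>}"
proof
  have "gen_field K {\<mu>} \<subseteq> gen_field K' {\<mu>}"
    using K'(2) gen_field_base_subset[of K' "{\<mu>}"] gen_field_gens_subset[of "{\<mu>}" K']
    by (intro gen_field_least subfield_gen_field) auto
  then show "gen_field K {\<mu>} \<subseteq> A \<inter> gen_field K' {\<mu>}"
    using A by blast
next
  have alg': "\<And>y. algebraic_over K' y" using algebraic_over_mono[OF K'(2) alg] .
  define P where "P = (\<lambda>i. \<mu> ^ i) ` {..<degree (min_poly K \<mu>)}"
  have "min_poly K' \<mu> = min_poly K \<mu>"
    using min_poly_eq_if_lin_disjoint[OF K K' alg lin_disjoint_subset[OF disj A] subfield_gen_field]
      gen_field_gens_subset by blast
  then have spans: "gen_field K {\<mu>} = span_over K P" "gen_field K' {\<mu>} = span_over K' P"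
    unfolding P_def using gen_field_singleton_eq_span_powers[OF K alg, of \<mu>]
      gen_field_singleton_eq_span_powers[OF K'(1) alg', of \<mu>] by simp_all
  show "A \<inter> gen_field K' {\<mu>} \<subseteq> gen_field K {\<mu>}"
  proof (rule subsetI, rule ccontr)
    fix \<gamma> assume \<gamma>: "\<gamma> \<in> A \<inter> gen_field K' {\<mu>}" "\<gamma> \<notin> gen_field K {\<mu>}"
    have "P \<subseteq> gen_field K {\<mu>}"
      unfolding P_def using subfield_power[OF subfield_gen_field] gen_field_gens_subset by blast
    then have "\<gamma> \<notin> P" using \<gamma>(2) by blast
    then have "lin_indep_over K (insert \<gamma> P)"
      using \<gamma>(2) lin_indep_over_insert[OF K lin_indep_powers_min_poly[OF K alg]] spans(1)
      unfolding P_def by blast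
    moreover have "insert \<gamma> P \<subseteq> A"
      using \<gamma>(1) \<open>P \<subseteq> gen_field K {\<mu>}\<close> A by blast
    ultimately have "lin_indep_over K' (insert \<gamma> P)"
      using disj unfolding lin_disjoint_def by blast
    then show False
      using \<gamma>(1) \<open>\<gamma> \<notin> P\<close> not_lin_indep_over_insert_if_in_span[OF K'(1)] spans(2)
      unfolding P_def by blast
  qed
qed

lemma subset_galois_closure: "L \<subseteq> galois_closure K L"
  unfolding galois_closure_def by blast

lemma min_poly_root_in_galois_closure:
  assumes "\<alpha> \<in> L" "poly (min_poly K \<alpha>) \<gamma> = 0"
  shows "\<gamma> \<in> galois_closure K L"
  using assms unfolding galois_closure_def normal_ext_def by blast

lemma min_poly_roots_in_compositum:
  assumes K: "subfield K" and K': "subfield K'" "K \<subseteq> K'" and alg: "\<And>y. algebraic_over K y"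
    and disj: "lin_disjoint K (galois_closure K M) K'" and M: "gen_field K {\<mu>} = M"
    and "\<alpha> \<in> M"
  shows "{x \<in> compositum M K'. poly (min_poly K \<alpha>) x = 0} = {x \<in> M. poly (min_poly K \<alpha>) x = 0}"
proof -
  have "galois_closure K M \<inter> compositum M K' = M"
    using inter_gen_field_eq_if_lin_disjoint[OF K K' alg disj, of \<mu>] subset_galois_closure[of M K]
    unfolding M gen_field_singleton_extend[OF K'(2) M] by simp
  moreover have "M \<subseteq> compositum M K'"
    by (rule gen_field_base_subset)
  ultimately show ?thesis
    using min_poly_root_in_galois_closure[OF \<open>\<alpha> \<in> M\<close>] by blast
qed

theorem theorem8p12:
  fixes K L M K' :: "'a::field set"
  assumes "subfield K" and "is_alg_closure_of K" and "perfect K"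
    and "finite_ext K L" and "galois_ext K K'" and "finite_ext K M" and "L \<subseteq> M"
    and "lin_disjoint K (galois_closure K L) K'"
    and "lin_disjoint K (galois_closure K M) K'"
  shows "root_cap_ext K M L = root_cap_ext K' (compositum M K') (compositum L K')"
proof -
  note K = assms(1) and closure = assms(2)
  have L: "subfield L" and M: "subfield M" "K \<subseteq> M"
    using assms(4,6) unfolding finite_ext_def by auto
  have K': "subfield K'" "K \<subseteq> K'"
    using assms(5) unfolding galois_ext_def finite_ext_def by auto
  note alg = algebraic_over_if_alg_closure[OF closure order.refl]
  note alg' = algebraic_over_if_alg_closure[OF closure K'(2)]
  obtain \<alpha> where \<alpha>: "gen_field K {\<alpha>} = L"
    using primitive_element[OF K closure assms(3,4)] by blast
  obtain \<mu> where \<mu>: "gen_field K {\<mu>} = M"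
    using primitive_element[OF K closure assms(3,6)] by blast
  have "\<alpha> \<in> L" using \<alpha> gen_field_gens_subset by blast
  then have "min_poly K' \<alpha> = min_poly K \<alpha>"
    using min_poly_eq_if_lin_disjoint[OF K K' alg
        lin_disjoint_subset[OF assms(8) subset_galois_closure] L]
    by blast
  then have "root_cap K M \<alpha> = root_cap K' (compositum M K') \<alpha>"
    unfolding root_cap_def
    using min_poly_roots_in_compositum[OF K K' alg assms(9) \<mu>] \<open>\<alpha> \<in> L\<close> assms(7) by auto
  moreover have "subfield (compositum M K')" "K' \<subseteq> compositum M K'"
    by (simp_all add: subfield_gen_field gen_field_gens_subset)
  ultimately show ?thesis
    using root_cap_ext_eq_root_cap[OF K M alg \<alpha>]
      root_cap_ext_eq_root_cap[OF K'(1) _ _ alg' gen_field_singleton_extend[OF K'(2) \<alpha>]]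
    by simp
qed

end
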